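(* Let $b\ge 2$ be an integer, let $G$ be a $b$-dc-semigroup, and suppose $I_b(j,l)\subseteq G$ for some $j\in\mathbf{N}$ and $l\in\mathbf{N}^*$. Let $d=\lceil j/l\rceil$. \begin{enumerate} \item If $d\ge 1$, then $I_b(dj,+\infty)\subseteq G$. \item If $d=0$, $l\ge 2$ and $b=2$, then $G=\mathbf{N}^*$. \item If $d=0$ and $b>2$, then $G=\mathbf{N}^*$. \end{enumerate}
   Context: $\mathbf{N}=\{0,1,2,\dots\}$ and $\mathbf{N}^*=\mathbf{N}\setminus\{0\}$. For an integer $b\ge2$, a $b$-dc-semigroup is a subsemigroup $G$ of the multiplicative semigroup $(\mathbf{N}^*,\cdot)$ which is closed with respect to the number of base-$b$ digits: if $x\in G$ and $b^{n-1}\le x<b^n$ then $\{y\in\mathbf{N}: b^{n-1}\le y<b^n\}\subseteq G$. For $i\in\mathbf{N}$ and $j\in\mathbf{N}^*$, $I_b(i,j)=\{x\in\mathbf{N}: b^i\le x<b^{i+j}\}$ and $I_b(i,+\infty)=\{x\in\mathbf{N}: x\ge b^i\}$. *)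

theory Defs
  imports Complex_Main
begin

definition Ib :: "nat \<Rightarrow> nat \<Rightarrow> nat \<Rightarrow> nat set" where
  "Ib b i j = {x. b ^ i \<le> x \<and> x < b ^ (i + j)}"

definition Ib_inf :: "nat \<Rightarrow> nat \<Rightarrow> nat set" where
  "Ib_inf b i = {x. b ^ i \<le> x}"

definition dc_semigroup :: "nat \<Rightarrow> nat set \<Rightarrow> bool" where
  "dc_semigroup b G \<longleftrightarrow>
     G \<subseteq> {x. x > 0} \<and>
     (\<forall>x\<in>G. \<forall>y\<in>G. x * y \<in> G) \<and>
     (\<forall>x\<in>G. \<forall>n\<ge>1. b ^ (n - 1) \<le> x \<and> x < b ^ n \<longrightarrow> {y. b ^ (n - 1) \<le> y \<and> y < b ^ n} \<subseteq> G)"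

end

theory Submission
  imports Defs "HOL-Library.Log_Nat"
begin

text \<open>The numbers with exactly e + 1 base-b digits form the interval
  [b^e, b^(e+1)); a b-dc-semigroup is a union of such digit classes, so it is described by the
  set of exponents e whose class it contains. Multiplying the smallest elements of two full
  classes e1, e2 shows that this exponent set is closed under addition; multiplying their
  largest elements shows that it is also closed under (e1, e2) \<mapsto> e1 + e2 + 1 when
  e1, e2 \<ge> 1. Starting from the block [j, j+l) these two operations fill every block
  [mj, m(j+l)), and these blocks cover all exponents from dj on as soon as j \<le> dl.
  If j = 0, then 1 and 2 lie in G, so all powers of 2 do, and every digit class contains one.\<close>

definition digit_class :: "nat \<Rightarrow> nat \<Rightarrow> nat set" where
  "digit_class b e = {b ^ e..<b ^ Suc e}"

definition full_classes :: "nat \<Rightarrow> nat set \<Rightarrow> nat set" where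
  "full_classes b G = {e. digit_class b e \<subseteq> G}"

lemma power_mem_digit_class: "b \<ge> 2 \<Longrightarrow> b ^ e \<in> digit_class b e"
  by (simp add: digit_class_def)

lemma power_Suc_diff_one_mem_digit_class:
  assumes "b \<ge> 2"
  shows "b ^ Suc e - 1 \<in> digit_class b e"
proof -
  have "b ^ e < b ^ Suc e"
    using assms by simp
  then show ?thesis
    unfolding digit_class_def atLeastLessThan_iff by linarith
qed

lemma mem_digit_class_floorlog:
  assumes "b \<ge> 2" "x > 0"
  shows "x \<in> digit_class b (floorlog b x - 1)"
proof -
  have "floorlog b x \<noteq> 0"
    using assms by (simp add: floorlog_eq_zero_iff)
  then show ?thesis
    using floorlog_bounds[OF assms(2)] assms(1) by (simp add: digit_class_def)
qed

lemma dc_semigroup_mult: "dc_semigroup b G \<Longrightarrow> x \<in> G \<Longrightarrow> y \<in> G \<Longrightarrow> x * y \<in> G"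
  unfolding dc_semigroup_def by blast

lemma dc_semigroup_digit_class_subset:
  assumes "dc_semigroup b G" "y \<in> G" "y \<in> digit_class b e"
  shows "digit_class b e \<subseteq> G"
proof -
  have "\<forall>n\<ge>1. b ^ (n - 1) \<le> y \<and> y < b ^ n \<longrightarrow> {z. b ^ (n - 1) \<le> z \<and> z < b ^ n} \<subseteq> G"
    using assms(1,2) unfolding dc_semigroup_def by blast
  from this[rule_format, of "Suc e"] show ?thesis
    using assms(3) by (auto simp: digit_class_def)
qed

lemma full_classes_add:
  assumes "dc_semigroup b G" "b \<ge> 2" "e1 \<in> full_classes b G" "e2 \<in> full_classes b G"
  shows "e1 + e2 \<in> full_classes b G"
proof -
  have "b ^ e1 * b ^ e2 \<in> G"
    using assms power_mem_digit_class dc_semigroup_mult unfolding full_classes_def by blast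
  then show ?thesis
    using dc_semigroup_digit_class_subset[OF assms(1) _ power_mem_digit_class[OF assms(2)]]
    by (simp add: full_classes_def power_add)
qed

lemma mult_le_diff_one_mult_diff_one:
  fixes b u v :: nat
  assumes "b \<ge> 2" "u \<ge> 2" "v \<ge> 2"
  shows "b * u * v \<le> (b * u - 1) * (b * v - 1)"
proof -
  have "2 * (v - 1) \<le> u * (v - 1)"
    using assms(2) by (rule mult_le_mono1)
  then have "v \<le> u * (v - 1)"
    using assms(3) by linarith
  then have "u + v \<le> u * v"
    using assms(3) by (simp add: right_diff_distrib')
  then have "b * u + b * v \<le> b * u * v"
    by (metis add_mult_distrib2 mult.assoc mult_le_mono2)
  moreover have "2 * (b * u * v) \<le> (b * u) * (b * v)"
    using mult_le_mono1[OF assms(1), of "b * u * v"] by (simp add: ac_simps)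
  ultimately have "b * u * v + (b * u + b * v) \<le> (b * u) * (b * v) + 1"
    by linarith
  moreover have "(b * u - 1) * (b * v - 1) + (b * u + b * v) = (b * u) * (b * v) + 1"
    using assms by (cases "b * u"; cases "b * v") auto
  ultimately show ?thesis
    by linarith
qed

lemma full_classes_add_Suc:
  assumes "dc_semigroup b G" "b \<ge> 2" "e1 \<in> full_classes b G" "e2 \<in> full_classes b G"
    and "e1 \<ge> 1" "e2 \<ge> 1"
  shows "e1 + e2 + 1 \<in> full_classes b G"
proof -
  define y where "y = (b ^ Suc e1 - 1) * (b ^ Suc e2 - 1)"
  have "y \<in> G"
    using assms(1,3,4) power_Suc_diff_one_mem_digit_class[OF assms(2)] dc_semigroup_mult
    unfolding y_def full_classes_def by blast
  have "b ^ 1 \<le> b ^ e1" "b ^ 1 \<le> b ^ e2"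
    using assms(2,5,6) by (intro power_increasing; simp)+
  then have "b * b ^ e1 * b ^ e2 \<le> y"
    unfolding y_def using assms(2) mult_le_diff_one_mult_diff_one[of b "b ^ e1" "b ^ e2"] by simp
  moreover have "y < b ^ Suc e1 * b ^ Suc e2"
    unfolding y_def using assms(2) by (simp add: diff_less mult_strict_mono')
  ultimately have "y \<in> digit_class b (e1 + e2 + 1)"
    by (simp add: digit_class_def power_add ac_simps)
  with \<open>y \<in> G\<close> show ?thesis
    using dc_semigroup_digit_class_subset[OF assms(1)] by (simp add: full_classes_def)
qed

lemma interval_subset_if_closed:
  fixes E :: "nat set"
  assumes add: "\<And>x y. x \<in> E \<Longrightarrow> y \<in> E \<Longrightarrow> x + y \<in> E"
    and add_Suc: "\<And>x y. x \<in> E \<Longrightarrow> y \<in> E \<Longrightarrow> x \<ge> 1 \<Longrightarrow> y \<ge> 1 \<Longrightarrow> x + y + 1 \<in> E"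
    and init: "{j..<j + l} \<subseteq> E" and "j \<ge> 1" "l \<ge> 1" "m \<ge> 1"
  shows "{m * j..<m * (j + l)} \<subseteq> E"
  using \<open>m \<ge> 1\<close>
proof (induction m rule: nat_induct_at_least)
  case base
  show ?case using init by simp
next
  case (Suc m)
  show ?case
  proof
    fix e assume e: "e \<in> {Suc m * j..<Suc m * (j + l)}"
    show "e \<in> E"
    proof (cases "e - j < m * (j + l)")
      case True
      then have "e - j \<in> E" "j \<in> E"
        using Suc.IH e init \<open>l \<ge> 1\<close> by auto
      then show ?thesis
        using add[of "e - j" j] e by auto
    next
      case False
      text \<open>Glue the top of the previous block to an element of the initial block.\<close>
      define x where "x = m * (j + l) - 1"
      define y where "y = e - m * (j + l)"
      have block: "m * (j + l) = m * j + m * l" "Suc m * (j + l) = m * (j + l) + (j + l)"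
        by (simp_all add: algebra_simps)
      have "m * l \<ge> 1" "j + l \<le> m * (j + l)"
        using Suc.hyps \<open>l \<ge> 1\<close> mult_le_mono1[of 1 m "j + l"] by simp_all
      then have "x \<in> {m * j..<m * (j + l)}"
        using block unfolding x_def atLeastLessThan_iff by linarith
      then have "x \<in> E"
        using Suc.IH by auto
      moreover have "y \<in> {j..<j + l}"
        using False e block unfolding y_def by auto
      then have "y \<in> E"
        using init by auto
      moreover have "x \<ge> 1" "y \<ge> 1" "e = x + y + 1"
        using \<open>j + l \<le> m * (j + l)\<close> \<open>y \<in> {j..<j + l}\<close> False e \<open>j \<ge> 1\<close> \<open>l \<ge> 1\<close>
        unfolding x_def y_def atLeastLessThan_iff by linarith+
      ultimately show ?thesis
        using add_Suc by auto
    qed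
  qed
qed

lemma atLeast_subset_if_closed:
  fixes E :: "nat set"
  assumes add: "\<And>x y. x \<in> E \<Longrightarrow> y \<in> E \<Longrightarrow> x + y \<in> E"
    and add_Suc: "\<And>x y. x \<in> E \<Longrightarrow> y \<in> E \<Longrightarrow> x \<ge> 1 \<Longrightarrow> y \<ge> 1 \<Longrightarrow> x + y + 1 \<in> E"
    and init: "{j..<j + l} \<subseteq> E" and "j \<ge> 1" "l \<ge> 1" "d \<ge> 1" "j \<le> d * l"
  shows "{d * j..} \<subseteq> E"
proof
  fix e assume "e \<in> {d * j..}"
  define m where "m = e div j"
  have "d \<le> m"
    using div_le_mono[of "d * j" e j] \<open>e \<in> {d * j..}\<close> \<open>j \<ge> 1\<close> by (simp add: m_def)
  have "m * j \<le> e" "e < m * j + j"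
    using div_mult_mod_eq[of e j] mod_less_divisor[of j e] \<open>j \<ge> 1\<close> unfolding m_def by linarith+
  moreover have "j \<le> m * l"
    using \<open>j \<le> d * l\<close> \<open>d \<le> m\<close> by (meson le_trans mult_le_mono1)
  ultimately have "e \<in> {m * j..<m * (j + l)}"
    by (simp add: algebra_simps)
  moreover have "m \<ge> 1"
    using \<open>d \<le> m\<close> \<open>d \<ge> 1\<close> by simp
  ultimately show "e \<in> E"
    using interval_subset_if_closed[OF add add_Suc init \<open>j \<ge> 1\<close> \<open>l \<ge> 1\<close>] by blast
qed

lemma interval_subset_full_classes:
  assumes "dc_semigroup b G" "b \<ge> 2" "Ib b j l \<subseteq> G"
  shows "{j..<j + l} \<subseteq> full_classes b G"
proof
  fix e assume "e \<in> {j..<j + l}"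
  then have "b ^ e \<in> Ib b j l"
    using assms(2) by (auto simp: Ib_def intro: power_increasing power_strict_increasing)
  then show "e \<in> full_classes b G"
    using assms dc_semigroup_digit_class_subset power_mem_digit_class
    unfolding full_classes_def by blast
qed

lemma Ib_inf_subset_if_full_classes:
  assumes "b \<ge> 2" "{i..} \<subseteq> full_classes b G"
  shows "Ib_inf b i \<subseteq> G"
proof
  fix x assume "x \<in> Ib_inf b i"
  then have "b ^ i \<le> x"
    by (simp add: Ib_inf_def)
  moreover have "b ^ i > 0"
    using assms(1) by simp
  ultimately have "x > 0"
    by linarith
  define e where "e = floorlog b x - 1"
  have "x \<in> digit_class b e"
    unfolding e_def using mem_digit_class_floorlog[OF assms(1) \<open>x > 0\<close>] .
  then have "i \<le> e"
    using \<open>b ^ i \<le> x\<close> power_less_imp_less_exp[of b i "Suc e"] assms(1)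
    by (simp add: digit_class_def)
  then show "x \<in> G"
    using assms(2) \<open>x \<in> digit_class b e\<close> by (auto simp: full_classes_def)
qed

lemma dc_semigroup_eq_positive_if_one_two:
  assumes "dc_semigroup b G" "b \<ge> 2" "1 \<in> G" "2 \<in> G"
  shows "G = {x. x > 0}"
proof
  show "G \<subseteq> {x. x > 0}"
    using assms(1) unfolding dc_semigroup_def by blast
  have power_two: "2 ^ k \<in> G" for k
    by (induction k) (use assms dc_semigroup_mult in auto)
  show "{x. x > 0} \<subseteq> G"
  proof
    fix x :: nat assume "x \<in> {x. x > 0}"
    define e where "e = floorlog b x - 1"
    have "b ^ e \<le> 2 ^ ceillog2 (b ^ e)" "2 ^ ceillog2 (b ^ e) < 2 * b ^ e"
      using le_two_power_ceillog2 two_power_ceillog2_gt assms(2) by simp_all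
    moreover have "2 * b ^ e \<le> b ^ Suc e"
      using assms(2) by simp
    ultimately have "2 ^ ceillog2 (b ^ e) \<in> digit_class b e"
      unfolding digit_class_def atLeastLessThan_iff by linarith
    then have "digit_class b e \<subseteq> G"
      using dc_semigroup_digit_class_subset[OF assms(1) power_two] by blast
    then show "x \<in> G"
      using mem_digit_class_floorlog[OF assms(2)] \<open>x \<in> {x. x > 0}\<close> unfolding e_def by auto
  qed
qed

lemma nat_ceiling_divide_eq_0_iff: "l > 0 \<Longrightarrow> nat \<lceil>real j / real l\<rceil> = 0 \<longleftrightarrow> j = 0"
  by (simp add: ceiling_le_zero divide_le_0_iff)

lemma le_nat_ceiling_divide_mult:
  assumes "l > 0"
  shows "j \<le> nat \<lceil>real j / real l\<rceil> * l"
proof -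
  have "real j / real l \<le> real (nat \<lceil>real j / real l\<rceil>)"
    by linarith
  then have "real j \<le> real (nat \<lceil>real j / real l\<rceil>) * real l"
    using assms by (metis of_nat_0_less_iff pos_divide_le_eq)
  then show ?thesis
    by (metis of_nat_le_iff of_nat_mult)
qed

theorem lemma2p3:
  fixes b j l :: nat and G :: "nat set"
  assumes "b \<ge> 2" and "dc_semigroup b G" and "l \<ge> 1" and "Ib b j l \<subseteq> G"
  defines "d \<equiv> nat \<lceil>real j / real l\<rceil>"
  shows "(d \<ge> 1 \<longrightarrow> Ib_inf b (d * j) \<subseteq> G)
       \<and> (d = 0 \<and> l \<ge> 2 \<and> b = 2 \<longrightarrow> G = {x. x > 0})
       \<and> (d = 0 \<and> b > 2 \<longrightarrow> G = {x. x > 0})"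
proof -
  have d_eq_0_iff: "d = 0 \<longleftrightarrow> j = 0"
    using nat_ceiling_divide_eq_0_iff assms(3) unfolding d_def by simp
  have "Ib_inf b (d * j) \<subseteq> G" if "d \<ge> 1"
  proof (rule Ib_inf_subset_if_full_classes[OF assms(1)])
    have "j \<ge> 1"
      using that d_eq_0_iff by simp
    moreover have "j \<le> d * l"
      unfolding d_def using le_nat_ceiling_divide_mult assms(3) by simp
    ultimately show "{d * j..} \<subseteq> full_classes b G"
      using atLeast_subset_if_closed[OF full_classes_add[OF assms(2,1)]
            full_classes_add_Suc[OF assms(2,1)] interval_subset_full_classes[OF assms(2,1,4)]
            _ assms(3) that] by blast
  qed
  moreover have "G = {x. x > 0}" if "d = 0" "l \<ge> 2 \<or> b > 2"
  proof -
    have "3 \<le> b ^ l"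
      using \<open>l \<ge> 2 \<or> b > 2\<close>
    proof
      assume "l \<ge> 2"
      then have "b ^ 2 \<le> b ^ l"
        using assms(1) by (intro power_increasing) simp_all
      then show ?thesis
        using power_mono[OF assms(1), of 2] by simp
    next
      assume "b > 2"
      then show ?thesis
        using power_increasing[of 1 l b] assms(3) by simp
    qed
    then have "1 \<in> G" "2 \<in> G"
      using assms(4) \<open>d = 0\<close> d_eq_0_iff by (auto simp: Ib_def)
    then show ?thesis
      using dc_semigroup_eq_positive_if_one_two[OF assms(2,1)] by blast
  qed
  ultimately show ?thesis
    by auto
qed

end
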